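(* Let $L,W,l>0$, $\Omega_2=(-l,L+l)\times(-l,W+l)$, and let $\Omega_3\subseteq\mathbb{R}^2$ be a bounded open set with smooth boundary such that $\overline{\Omega}_2\subseteq\Omega_3$. Let $\chi\in\mathcal{C}^\infty_0(\overline{\Omega}_3)$ be a smooth cutoff function with $\chi=1$ on $\overline{\Omega}_2$. For $M>0$ let $\gamma\in\mathcal{C}^\infty([0,1];[0,\infty))$ satisfy $\operatorname{supp}\gamma\subseteq(0,1)$ and $\gamma(t)=M$ for all $t\in[1/4,3/4]$; set $\mathbf{y}^*(\mathbf{x},t)=(\gamma(t)\chi(\mathbf{x}),0)'$ for $(\mathbf{x},t)\in\overline{\Omega}_3\times[0,1]$, and let $\mathcal{Y}(\mathbf{x},s,t)$ be the flow solving $\frac{d}{dt}\mathcal{Y}(\mathbf{x},s,t)=\mathbf{y}^*(\mathcal{Y}(\mathbf{x},s,t),t)$, $\mathcal{Y}(\mathbf{x},s,s)=\mathbf{x}$. Then, if $M>0$ is chosen large enough, $\mathcal{Y}(\mathbf{x},0,1)\notin\overline{\Omega}_2$ for all $\mathbf{x}\in\overline{\Omega}_2$. *)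

theory Defs
  imports "HOL-Analysis.Analysis"
begin

definition pd :: "bool \<Rightarrow> (real \<times> real \<Rightarrow> real) \<Rightarrow> real \<times> real \<Rightarrow> real" where
  "pd b f = (\<lambda>(x, y). if b then deriv (\<lambda>s. f (s, y)) x else deriv (\<lambda>s. f (x, s)) y)"

definition smooth2 :: "(real \<times> real \<Rightarrow> real) \<Rightarrow> bool" where
  "smooth2 f \<longleftrightarrow> (\<forall>ds z. foldr pd ds f differentiable (at z))"

definition smooth1 :: "(real \<Rightarrow> real) \<Rightarrow> bool" where
  "smooth1 g \<longleftrightarrow> (\<forall>n z. (deriv ^^ n) g differentiable (at z))"

definition smooth_boundary :: "(real \<times> real) set \<Rightarrow> bool" where
  "smooth_boundary \<Omega> \<longleftrightarrow> (\<forall>p\<in>frontier \<Omega>. \<exists>U \<phi>. open U \<and> p \<in> U \<and> smooth2 \<phi> \<and>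
      (\<forall>z\<in>U. (pd True \<phi> z, pd False \<phi> z) \<noteq> (0, 0)) \<and>
      \<Omega> \<inter> U = {z\<in>U. \<phi> z < 0})"

end

theory Submission
  imports Defs
begin

text \<open>The velocity field is horizontal, so the flow preserves the second coordinate \<open>y\<close>
  and the first coordinate \<open>f\<close> solves the scalar equation \<open>f' = \<gamma>(t) h(f)\<close> with
  \<open>h = \<chi>(\<cdot>, y)\<close> continuous and equal to \<open>1\<close> on \<open>[-l, L+l]\<close>. As \<open>h > 0\<close> on a
  neighbourhood of this interval and \<open>\<gamma> \<ge> 0\<close>, the solution can neither fall below \<open>-l\<close>
  nor fall back below \<open>L+l\<close> once it has passed it. While it stays in \<open>[-l, L+l]\<close> during
  \<open>[1/4, 3/4]\<close> it grows at rate \<open>M\<close>, so for \<open>M > 2(L+2l)\<close> it must pass \<open>L+l\<close>.\<close>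

lemma has_vector_derivative_fst:
  assumes "(p has_vector_derivative (u, v)) F"
  shows "((\<lambda>t. fst (p t)) has_real_derivative u) F"
  using bounded_linear.has_vector_derivative[OF bounded_linear_fst assms]
  by (simp add: has_real_derivative_iff_has_vector_derivative)

lemma horizontal_path_snd_const:
  assumes "\<And>t. t \<in> {a..b} \<Longrightarrow> (p has_vector_derivative (v t, 0)) (at t within {a..b})"
    and "t \<in> {a..b}"
  shows "snd (p t) = snd (p a)"
proof -
  have "((\<lambda>t. snd (p t)) has_vector_derivative 0) (at t within {a..b})" if "t \<in> {a..b}" for t
    using bounded_linear.has_vector_derivative[OF bounded_linear_snd assms(1)[OF that]] by simp
  then obtain y where "\<And>t. t \<in> {a..b} \<Longrightarrow> snd (p t) = y"
    using has_vector_derivative_zero_constant[of "{a..b}"] by blast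
  moreover have "a \<in> {a..b}"
    using assms(2) by simp
  ultimately show ?thesis
    using assms(2) by simp
qed

lemma smooth2_imp_continuous:
  assumes "smooth2 f"
  shows "continuous_on UNIV f"
proof -
  have "\<And>z. f differentiable (at z)"
    using assms unfolding smooth2_def by (metis foldr.simps(1) id_apply)
  then show ?thesis
    by (simp add: continuous_at_imp_continuous_on differentiable_imp_continuous_within)
qed

lemma nondecreasing_if_deriv_nonneg_within:
  fixes f f' :: "real \<Rightarrow> real"
  assumes deriv: "\<And>t. t \<in> {a..b} \<Longrightarrow> (f has_real_derivative f' t) (at t within {a..b})"
    and nonneg: "\<And>t. r < t \<Longrightarrow> t < s \<Longrightarrow> f' t \<ge> 0"
    and "a \<le> r" "r \<le> s" "s \<le> b"
  shows "f r \<le> f s"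
proof (rule DERIV_nonneg_imp_increasing_open[OF \<open>r \<le> s\<close>])
  fix t assume "r < t" "t < s"
  with assms(3-5) have "(f has_real_derivative f' t) (at t)"
    using deriv[of t] at_within_Icc_at[of a t b] by auto
  then show "\<exists>y. DERIV f t :> y \<and> 0 \<le> y"
    using nonneg \<open>r < t\<close> \<open>t < s\<close> by blast
next
  have "continuous_on {a..b} f"
    using deriv DERIV_continuous continuous_on_eq_continuous_within by blast
  then show "continuous_on {r..s} f"
    by (rule continuous_on_subset) (use assms(3-5) in auto)
qed

text \<open>The proof looks at the last time \<open>m\<close> at which \<open>f \<ge> c\<close>; right after \<open>m\<close>, \<open>f\<close> is in \<open>(\<alpha>, c)\<close>, hence nondecreasing.\<close>

lemma stays_above_level:
  fixes f f' :: "real \<Rightarrow> real"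
  assumes deriv: "\<And>t. t \<in> {a..b} \<Longrightarrow> (f has_real_derivative f' t) (at t within {a..b})"
    and nonneg: "\<And>t. t \<in> {a..b} \<Longrightarrow> \<alpha> < f t \<Longrightarrow> f t < c \<Longrightarrow> f' t \<ge> 0"
    and "\<alpha> < c" and rs: "a \<le> r" "r \<le> s" "s \<le> b" and "c \<le> f r"
  shows "c \<le> f s"
proof (rule ccontr)
  assume "\<not> c \<le> f s"
  have cont: "continuous_on {a..b} f"
    using deriv DERIV_continuous continuous_on_eq_continuous_within by blast
  define S where "S = {r..s} \<inter> f -` {c..}"
  have "closed S"
    unfolding S_def
  proof (rule continuous_closed_preimage)
    show "continuous_on {r..s} f"
      by (rule continuous_on_subset[OF cont]) (use rs in auto)
  qed auto
  moreover have "S \<noteq> {}" "bdd_above S"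
    using rs \<open>c \<le> f r\<close> unfolding S_def by auto
  ultimately have "Sup S \<in> S"
    using closed_contains_Sup by blast
  define m where "m = Sup S"
  have m: "c \<le> f m" "r \<le> m" "m \<le> s"
    using \<open>Sup S \<in> S\<close> unfolding m_def S_def by auto
  with \<open>\<not> c \<le> f s\<close> have "m < s"
    by (cases "m = s") auto
  have below: "f t < c" if "m < t" "t \<le> s" for t
  proof (rule ccontr)
    assume "\<not> f t < c"
    with that m have "t \<in> S"
      unfolding S_def by auto
    with \<open>bdd_above S\<close> have "t \<le> m"
      unfolding m_def by (simp add: cSup_upper)
    with that show False by simp
  qed
  have "continuous (at m within {a..b}) f"
    using cont m rs by (simp add: continuous_on_eq_continuous_within)
  then obtain e where "e > 0"
    and e: "\<And>t. t \<in> {a..b} \<Longrightarrow> dist t m < e \<Longrightarrow> dist (f t) (f m) < f m - \<alpha>"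
    using \<open>\<alpha> < c\<close> m unfolding continuous_within_eps_delta by (metis diff_gt_0_iff_gt order_less_le_trans)
  define m' where "m' = min (m + e/2) s"
  have m': "m < m'" "m' \<le> s"
    using \<open>e > 0\<close> \<open>m < s\<close> unfolding m'_def by auto
  have "f m \<le> f m'"
  proof (rule nondecreasing_if_deriv_nonneg_within[OF deriv])
    fix t assume "m < t" "t < m'"
    then have "t \<in> {a..b}" "dist t m < e"
      using m m' rs \<open>e > 0\<close> unfolding m'_def by (auto simp: dist_real_def)
    then have "\<alpha> < f t"
      using e[of t] by (auto simp: dist_real_def)
    moreover have "f t < c"
      using below \<open>m < t\<close> \<open>t < m'\<close> m' by auto
    ultimately show "f' t \<ge> 0"
      using nonneg \<open>t \<in> {a..b}\<close> by blast
  qed (use m m' rs in auto)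
  with m(1) below[OF m'] show False by simp
qed

lemma continuous_pos_near_Icc:
  fixes h :: "real \<Rightarrow> real"
  assumes "continuous_on UNIV h" "\<And>u. u \<in> {c..d} \<Longrightarrow> h u > 0" "c \<le> d"
  obtains \<delta> where "\<delta> > 0" "\<And>u. c - \<delta> < u \<Longrightarrow> u < d + \<delta> \<Longrightarrow> h u > 0"
proof -
  have "open (h -` {0<..})"
    using assms(1) by (simp add: continuous_on_open_vimage)
  then obtain \<delta> where "\<delta> > 0" and \<delta>: "(\<Union>x\<in>{c..d}. ball x \<delta>) \<subseteq> h -` {0<..}"
    using compact_subset_open_imp_ball_epsilon_subset[of "{c..d}"] assms(2) by blast
  have "h u > 0" if "c - \<delta> < u" "u < d + \<delta>" for u
  proof -
    have "u \<in> ball c \<delta> \<or> u \<in> {c..d} \<or> u \<in> ball d \<delta>"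
      using that by (auto simp: dist_real_def)
    then show ?thesis
      using \<delta> assms(2,3) by fastforce
  qed
  with \<open>\<delta> > 0\<close> show ?thesis
    using that by blast
qed

lemma scalar_flow_passes_plateau:
  fixes f h \<gamma> :: "real \<Rightarrow> real"
  assumes h: "continuous_on UNIV h" "\<And>u. u \<in> {c..d} \<Longrightarrow> h u = 1"
    and \<gamma>: "\<And>t. t \<in> {a..b} \<Longrightarrow> \<gamma> t \<ge> 0" "\<And>t. t \<in> {r..s} \<Longrightarrow> \<gamma> t = M"
    and rs: "a \<le> r" "r \<le> s" "s \<le> b" and M: "M * (s - r) > d - c"
    and f: "\<And>t. t \<in> {a..b} \<Longrightarrow> (f has_real_derivative \<gamma> t * h (f t)) (at t within {a..b})"
    and "f a \<in> {c..d}"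
  shows "f b > d"
proof -
  have "h u > 0" if "u \<in> {c..d}" for u
    using h(2)[OF that] by simp
  moreover have "c \<le> d"
    using \<open>f a \<in> {c..d}\<close> by simp
  ultimately obtain \<delta> where "\<delta> > 0" and h_pos: "\<And>u. c - \<delta> < u \<Longrightarrow> u < d + \<delta> \<Longrightarrow> h u > 0"
    using continuous_pos_near_Icc[OF h(1)] by blast
  have f'_nonneg: "\<gamma> t * h (f t) \<ge> 0" if "t \<in> {a..b}" "c - \<delta> < f t" "f t < d + \<delta>" for t
    using h_pos[OF that(2,3)] \<gamma>(1)[OF that(1)] by simp
  have above_c: "c \<le> f t" if "t \<in> {a..b}" for t
    by (rule stays_above_level[OF f, where \<alpha> = "c - \<delta>" and r = a])
      (use f'_nonneg \<open>\<delta> > 0\<close> \<open>f a \<in> {c..d}\<close> that in auto)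
  have "\<exists>t\<in>{r..s}. f t > d"
  proof (rule ccontr)
    assume "\<not> ?thesis"
    then have le_d: "f t \<le> d" if "t \<in> {r..s}" for t
      using that by force
    have "((\<lambda>t. f t - M * t) has_real_derivative \<gamma> t * h (f t) - M) (at t within {a..b})"
      if "t \<in> {a..b}" for t
      by (rule derivative_eq_intros f[OF that])+ auto
    then have "f r - M * r \<le> f s - M * s"
    proof (rule nondecreasing_if_deriv_nonneg_within)
      fix t assume "r < t" "t < s"
      with rs le_d above_c have "f t \<in> {c..d}" by auto
      with h(2) \<gamma>(2) \<open>r < t\<close> \<open>t < s\<close> show "\<gamma> t * h (f t) - M \<ge> 0" by simp
    qed (use rs in auto)
    moreover have "c \<le> f r" "f s \<le> d"
      using above_c le_d rs by auto
    ultimately show False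
      using M by (simp add: algebra_simps)
  qed
  then obtain t1 where "t1 \<in> {r..s}" "f t1 > d"
    by blast
  have "min (f t1) (d + \<delta>/2) \<le> f b"
    by (rule stays_above_level[OF f, where \<alpha> = "c - \<delta>" and r = t1])
      (use f'_nonneg \<open>\<delta> > 0\<close> \<open>t1 \<in> {r..s}\<close> \<open>f t1 > d\<close> rs \<open>f a \<in> {c..d}\<close> in auto)
  with \<open>f t1 > d\<close> \<open>\<delta> > 0\<close> show ?thesis by linarith
qed

lemma horizontal_flow_passes_plateau:
  fixes p :: "real \<Rightarrow> real \<times> real" and chi :: "real \<times> real \<Rightarrow> real" and \<gamma> :: "real \<Rightarrow> real"
  assumes chi: "continuous_on UNIV chi" "\<And>u. u \<in> {c..d} \<Longrightarrow> chi (u, snd (p a)) = 1"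
    and "\<And>t. t \<in> {a..b} \<Longrightarrow> \<gamma> t \<ge> 0" "\<And>t. t \<in> {r..s} \<Longrightarrow> \<gamma> t = M"
    and "a \<le> r" "r \<le> s" "s \<le> b" "M * (s - r) > d - c"
    and p: "\<And>t. t \<in> {a..b} \<Longrightarrow> (p has_vector_derivative (\<gamma> t * chi (p t), 0)) (at t within {a..b})"
    and "fst (p a) \<in> {c..d}"
  shows "fst (p b) > d"
proof (rule scalar_flow_passes_plateau[where f = "\<lambda>t. fst (p t)" and h = "\<lambda>u. chi (u, snd (p a))"
      and \<gamma> = \<gamma>])
  show "continuous_on UNIV (\<lambda>u. chi (u, snd (p a)))"
    by (rule continuous_on_compose2[OF chi(1)]) (auto intro: continuous_intros)
  show "((\<lambda>t. fst (p t)) has_real_derivative \<gamma> t * chi (fst (p t), snd (p a))) (at t within {a..b})"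
    if "t \<in> {a..b}" for t
    using has_vector_derivative_fst[OF p[OF that]] horizontal_path_snd_const[OF p that]
    by (metis prod.collapse)
qed (use assms in auto)

theorem lemma2p1:
  fixes L W l :: real and \<Omega>2 \<Omega>3 :: "(real \<times> real) set" and chi :: "real \<times> real \<Rightarrow> real"
  assumes "L > 0" "W > 0" "l > 0"
  defines "\<Omega>2 \<equiv> {-l<..<L+l} \<times> {-l<..<W+l}"
  assumes "open \<Omega>3" "bounded \<Omega>3" "smooth_boundary \<Omega>3" "closure \<Omega>2 \<subseteq> \<Omega>3"
    and "smooth2 chi" "closure {z. chi z \<noteq> 0} \<subseteq> closure \<Omega>3"
    and "\<forall>z\<in>closure \<Omega>2. chi z = 1"
  shows "\<exists>M0. \<forall>M\<ge>M0. \<forall>(\<gamma> :: real \<Rightarrow> real) (Y :: real \<times> real \<Rightarrow> real \<Rightarrow> real \<Rightarrow> real \<times> real).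
    (M > 0 \<and> smooth1 \<gamma> \<and> (\<forall>t\<in>{0..1}. \<gamma> t \<ge> 0) \<and>
     closure {t. \<gamma> t \<noteq> 0} \<subseteq> {0<..<1} \<and> (\<forall>t\<in>{1/4..3/4}. \<gamma> t = M) \<and>
     (\<forall>x\<in>closure \<Omega>3. \<forall>s\<in>{0..1}. Y x s s = x \<and>
        (\<forall>t\<in>{0..1}. Y x s t \<in> closure \<Omega>3 \<and>
           (Y x s has_vector_derivative (\<gamma> t * chi (Y x s t), 0)) (at t within {0..1}))))
    \<longrightarrow> (\<forall>x\<in>closure \<Omega>2. Y x 0 1 \<notin> closure \<Omega>2)"
proof (intro exI[of _ "2 * (L + 2 * l) + 1"] allI impI ballI)
  fix M \<gamma> Y x
  assume M: "M \<ge> 2 * (L + 2 * l) + 1"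
  assume H: "M > 0 \<and> smooth1 \<gamma> \<and> (\<forall>t\<in>{0..1}. \<gamma> t \<ge> 0) \<and>
     closure {t. \<gamma> t \<noteq> 0} \<subseteq> {0<..<1} \<and> (\<forall>t\<in>{1/4..3/4}. \<gamma> t = M) \<and>
     (\<forall>x\<in>closure \<Omega>3. \<forall>s\<in>{0..1}. Y x s s = x \<and>
        (\<forall>t\<in>{0..1}. Y x s t \<in> closure \<Omega>3 \<and>
           (Y x s has_vector_derivative (\<gamma> t * chi (Y x s t), 0)) (at t within {0..1})))"
  assume x: "x \<in> closure \<Omega>2"
  have cl\<Omega>2: "closure \<Omega>2 = {-l..L+l} \<times> {-l..W+l}"
    unfolding \<Omega>2_def closure_Times using assms(1-3) by simp
  have "x \<in> closure \<Omega>3"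
    using x assms(8) closure_subset by blast
  with H have "Y x 0 0 = x"
    and "\<And>t. t \<in> {0..1} \<Longrightarrow>
      (Y x 0 has_vector_derivative (\<gamma> t * chi (Y x 0 t), 0)) (at t within {0..1})"
    by auto
  then have "fst (Y x 0 1) > L + l"
    using x H M assms(1-3,11) smooth2_imp_continuous[OF assms(9)] unfolding cl\<Omega>2
    by (intro horizontal_flow_passes_plateau[where p = "Y x 0" and chi = chi and \<gamma> = \<gamma>
        and a = 0 and b = 1 and r = "1/4" and s = "3/4" and c = "-l" and M = M])
      (auto simp: mem_Times_iff)
  then show "Y x 0 1 \<notin> closure \<Omega>2"
    unfolding cl\<Omega>2 by (auto simp: mem_Times_iff)
qed

end
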